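(* Let $G$ be a weakly-reversible chemical reaction network in $s$ species and let $Z\subseteq\{1,\dots,s\}$ be nonempty. Then $Z$ is a siphon of $G$ if and only if there exists $\alpha\in\mathbb{R}^s_{\ge0}\cap V_{\mathbb{R}}(\mathcal{E}_G)$ with $Z=\{i:\alpha_i=0\}$. Moreover, $Z$ is a critical siphon if and only if there exists such an $\alpha$ for which, in addition, the invariant polyhedron containing $\alpha$ intersects $\mathbb{R}^s_{>0}$.
   Context: A chemical reaction network (CRN) consists of positive integers $s,n$, a finite directed graph $G$ with vertex set $\{1,\dots,n\}$ and edge set $E(G)$, and an injective labeling of vertex $i$ by a monic monomial $\psi_i=\prod_{j=1}^s x_j^{y_{ij}}$, $y_i=(y_{i1},\dots,y_{is})$. $G$ is weakly-reversible iff each connected component is strongly connected. The associated event-system $\mathcal{E}_G$ is the set of binomials $\psi_i-\psi_j$, one for each pair $\{i,j\}$ with $(i,j)\in E(G)$ or $(j,i)\in E(G)$; $V_{\mathbb{R}}(\mathcal{E}_G)\subseteq\mathbb{R}^s$ is its real zero set. The stoichiometric subspace is $S_G=\mathrm{span}\{y_i-y_j:(i,j)\in E(G)\}$, and for $x\in\mathbb{R}^s_{\ge0}$ the invariant polyhedron containing $x$ is $(x+S_G)\cap\mathbb{R}^s_{\ge0}$. A nonempty $Z\subseteq\{1,\dots,s\}$ is a siphon iff for every $(i,j)\in E(G)$, if $x_k\mid\psi_j$ for some $k\in Z$ then $x_l\mid\psi_i$ for some $l\in Z$. A siphon $Z$ is critical iff there is $z\in\mathbb{R}^s_{\ge0}$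 with $Z=\{i:z_i=0\}$ such that the invariant polyhedron containing $z$ meets $\mathbb{R}^s_{>0}$. *)

theory Defs
  imports "HOL-Analysis.Analysis"
begin

text \<open>A CRN: species are indexed by a finite type 's (so s = CARD('s)),
  vertices are 1..n, edges E, and vertex i is labelled by the monic monomial
  with exponent vector y i (y i k = exponent of species k).\<close>

definition crn :: "nat \<Rightarrow> (nat \<times> nat) set \<Rightarrow> (nat \<Rightarrow> 's::finite \<Rightarrow> nat) \<Rightarrow> bool" where
  "crn n E y \<longleftrightarrow> n \<ge> 1 \<and> E \<subseteq> {1..n} \<times> {1..n} \<and> inj_on y {1..n}"

definition monomial :: "(nat \<Rightarrow> 's::finite \<Rightarrow> nat) \<Rightarrow> nat \<Rightarrow> real ^ 's \<Rightarrow> real" where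
  "monomial y i x = (\<Prod>k\<in>UNIV. (x $ k) ^ (y i k))"

definition weakly_reversible :: "nat \<Rightarrow> (nat \<times> nat) set \<Rightarrow> bool" where
  "weakly_reversible n E \<longleftrightarrow>
     (\<forall>u\<in>{1..n}. \<forall>v\<in>{1..n}. (u, v) \<in> (E \<union> E\<inverse>)\<^sup>* \<longrightarrow> (u, v) \<in> E\<^sup>*)"

definition event_variety :: "(nat \<times> nat) set \<Rightarrow> (nat \<Rightarrow> 's::finite \<Rightarrow> nat) \<Rightarrow> (real ^ 's) set" where
  "event_variety E y = {x. \<forall>(i, j)\<in>E. monomial y i x - monomial y j x = 0}"

definition stoich_space :: "(nat \<times> nat) set \<Rightarrow> (nat \<Rightarrow> 's::finite \<Rightarrow> nat) \<Rightarrow> (real ^ 's) set" where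
  "stoich_space E y = span {(\<chi> k. real (y i k)) - (\<chi> k. real (y j k)) | i j. (i, j) \<in> E}"

definition nonneg_orthant :: "(real ^ 's::finite) set" where
  "nonneg_orthant = {x. \<forall>k. x $ k \<ge> 0}"

definition pos_orthant :: "(real ^ 's::finite) set" where
  "pos_orthant = {x. \<forall>k. x $ k > 0}"

definition invariant_polyhedron :: "(nat \<times> nat) set \<Rightarrow> (nat \<Rightarrow> 's::finite \<Rightarrow> nat) \<Rightarrow> real ^ 's \<Rightarrow> (real ^ 's) set" where
  "invariant_polyhedron E y x = {x + v | v. v \<in> stoich_space E y} \<inter> nonneg_orthant"

definition siphon :: "(nat \<times> nat) set \<Rightarrow> (nat \<Rightarrow> 's::finite \<Rightarrow> nat) \<Rightarrow> 's set \<Rightarrow> bool" where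
  "siphon E y Z \<longleftrightarrow> Z \<noteq> {} \<and>
     (\<forall>(i, j)\<in>E. (\<exists>k\<in>Z. y j k > 0) \<longrightarrow> (\<exists>l\<in>Z. y i l > 0))"

definition zero_set :: "real ^ 's::finite \<Rightarrow> 's set" where
  "zero_set x = {k. x $ k = 0}"

definition critical_siphon :: "(nat \<times> nat) set \<Rightarrow> (nat \<Rightarrow> 's::finite \<Rightarrow> nat) \<Rightarrow> 's set \<Rightarrow> bool" where
  "critical_siphon E y Z \<longleftrightarrow> siphon E y Z \<and>
     (\<exists>z\<in>nonneg_orthant. Z = zero_set z \<and> invariant_polyhedron E y z \<inter> pos_orthant \<noteq> {})"

end

theory Submission
  imports Defs
begin

text \<open>A monomial vanishes at a nonnegative point exactly when its support meets the zero set of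
  the point. Hence along an edge \<open>(i, j)\<close> of the event variety, \<open>\<psi>\<^sub>j\<close> vanishes only if \<open>\<psi>\<^sub>i\<close> does,
  which is the siphon condition. Conversely, for a siphon \<open>Z\<close> the 0/1 indicator of the
  complement of \<open>Z\<close> makes each monomial equal to \<open>0\<close> or \<open>1\<close>; weak reversibility (every edge lies on
  a directed cycle) forces both ends of an edge to take the same value. Finally, whether an
  invariant polyhedron meets the positive orthant depends only on the zero set of its base point:
  if \<open>a + v > 0\<close> then \<open>v > 0\<close> on the zeros of \<open>a\<close>, so \<open>b + t v > 0\<close> for small \<open>t > 0\<close> whenever \<open>b\<close>
  has the same zeros.\<close>

lemma monomial_eq_0_iff:
  "monomial y i x = 0 \<longleftrightarrow> (\<exists>k. x $ k = 0 \<and> y i k > 0)"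
  unfolding monomial_def by (simp add: prod_zero_iff)

lemma siphon_rtrancl_support:
  assumes "siphon E y Z" "(i, j) \<in> E\<^sup>*" "\<exists>k\<in>Z. y j k > 0"
  shows "\<exists>k\<in>Z. y i k > 0"
  using assms(2,3)
proof (induction rule: converse_rtrancl_induct)
  case base
  then show ?case .
next
  case (step i i')
  then show ?case using assms(1) unfolding siphon_def by blast
qed

lemma siphon_zero_set_event_variety:
  assumes "\<alpha> \<in> event_variety E y" "Z = zero_set \<alpha>" "Z \<noteq> {}"
  shows "siphon E y Z"
  unfolding siphon_def
proof (intro conjI assms(3) ballI, clarify)
  fix i j k assume ij: "(i, j) \<in> E" and "k \<in> Z" "0 < y j k"
  then have "monomial y j \<alpha> = 0"
    using assms(2) unfolding monomial_eq_0_iff zero_set_def by auto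
  moreover have "monomial y i \<alpha> = monomial y j \<alpha>"
    using assms(1) ij unfolding event_variety_def by auto
  ultimately have "monomial y i \<alpha> = 0"
    by simp
  then show "\<exists>l\<in>Z. 0 < y i l"
    using assms(2) unfolding monomial_eq_0_iff zero_set_def by auto
qed

lemma siphon_indicator_in_event_variety:
  fixes Z :: "'s::finite set"
  assumes "siphon E y Z" "weakly_reversible n E" "E \<subseteq> {1..n} \<times> {1..n}"
  shows "(\<chi> k. if k \<in> Z then 0 else 1) \<in> event_variety E y"
  unfolding event_variety_def
proof (intro CollectI ballI, clarify)
  define \<alpha> :: "real ^ 's" where "\<alpha> = (\<chi> k. if k \<in> Z then 0 else 1)"
  have monomial_\<alpha>: "monomial y i \<alpha> = (if \<exists>k\<in>Z. y i k > 0 then 0 else 1)" for i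
    unfolding monomial_def \<alpha>_def by (auto intro!: prod.neutral simp: prod_zero_iff)
  fix i j assume ij: "(i, j) \<in> E"
  then have "(j, i) \<in> E\<^sup>*"
    using assms(2,3) unfolding weakly_reversible_def by blast
  then have "(\<exists>k\<in>Z. y i k > 0) \<longleftrightarrow> (\<exists>k\<in>Z. y j k > 0)"
    using siphon_rtrancl_support[OF assms(1)] assms(1) ij unfolding siphon_def by blast
  then show "monomial y i \<alpha> - monomial y j \<alpha> = 0"
    unfolding monomial_\<alpha> by simp
qed

lemma pos_orthant_add_scaled:
  fixes a b v :: "real ^ 'n::finite"
  assumes "a + v \<in> pos_orthant" "b \<in> nonneg_orthant" "zero_set b \<subseteq> zero_set a"
  shows "\<exists>t>0. b + t *\<^sub>R v \<in> pos_orthant"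
proof -
  have "\<forall>\<^sub>F t in at_right 0. 0 < b $ k + t * v $ k" for k
  proof (cases "b $ k = 0")
    case True
    then have "a $ k = 0"
      using assms(3) unfolding zero_set_def by blast
    then have "0 < v $ k"
      using assms(1) unfolding pos_orthant_def by (metis add_0 vector_add_component mem_Collect_eq)
    then show ?thesis
      using True by (auto simp: eventually_at_right_field intro: exI[of _ 1])
  next
    case False
    then have "0 < b $ k"
      using assms(2) unfolding nonneg_orthant_def by (simp add: order_neq_le_trans)
    moreover have "((\<lambda>t. b $ k + t * v $ k) \<longlongrightarrow> b $ k) (at_right 0)"
      by (auto intro!: tendsto_eq_intros)
    ultimately show ?thesis
      by (rule order_tendstoD(1)[rotated])
  qed
  then have "\<forall>\<^sub>F t in at_right 0. t > 0 \<and> (\<forall>k. 0 < b $ k + t * v $ k)"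
    by (intro eventually_conj eventually_at_right_less eventually_all_finite)
  then obtain t :: real where "t > 0" "\<forall>k. 0 < b $ k + t * v $ k"
    using eventually_happens' trivial_limit_at_right_real by blast
  then show ?thesis
    unfolding pos_orthant_def by auto
qed

lemma invariant_polyhedron_meets_pos_orthant_zero_set:
  assumes "invariant_polyhedron E y a \<inter> pos_orthant \<noteq> {}"
    and "b \<in> nonneg_orthant" "zero_set b \<subseteq> zero_set a"
  shows "invariant_polyhedron E y b \<inter> pos_orthant \<noteq> {}"
proof -
  obtain v where v: "v \<in> stoich_space E y" "a + v \<in> pos_orthant"
    using assms(1) unfolding invariant_polyhedron_def by blast
  obtain t where "b + t *\<^sub>R v \<in> pos_orthant"
    using pos_orthant_add_scaled[OF v(2) assms(2,3)] by blast
  moreover have "t *\<^sub>R v \<in> stoich_space E y"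
    using v(1) unfolding stoich_space_def by (rule span_mul)
  moreover have "pos_orthant \<subseteq> nonneg_orthant"
    unfolding pos_orthant_def nonneg_orthant_def by (auto simp: less_imp_le)
  ultimately show ?thesis
    unfolding invariant_polyhedron_def by blast
qed

theorem lemma4p6:
  fixes n :: nat and E :: "(nat \<times> nat) set" and y :: "nat \<Rightarrow> 's::finite \<Rightarrow> nat"
    and Z :: "'s set"
  assumes "crn n E y" and "weakly_reversible n E" and "Z \<noteq> {}"
  shows "(siphon E y Z \<longleftrightarrow>
            (\<exists>\<alpha>\<in>nonneg_orthant \<inter> event_variety E y. Z = zero_set \<alpha>))
       \<and> (critical_siphon E y Z \<longleftrightarrow>
            (\<exists>\<alpha>\<in>nonneg_orthant \<inter> event_variety E y. Z = zero_set \<alpha> \<and>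
                invariant_polyhedron E y \<alpha> \<inter> pos_orthant \<noteq> {}))"
proof -
  have siphon_iff: "siphon E y Z \<longleftrightarrow> (\<exists>\<alpha>\<in>nonneg_orthant \<inter> event_variety E y. Z = zero_set \<alpha>)"
  proof
    assume "siphon E y Z"
    define \<alpha> :: "real ^ 's" where "\<alpha> = (\<chi> k. if k \<in> Z then 0 else 1)"
    have "E \<subseteq> {1..n} \<times> {1..n}"
      using assms(1) unfolding crn_def by blast
    then have "\<alpha> \<in> event_variety E y"
      using siphon_indicator_in_event_variety \<open>siphon E y Z\<close> assms(2) unfolding \<alpha>_def by blast
    moreover have "\<alpha> \<in> nonneg_orthant" "Z = zero_set \<alpha>"
      unfolding \<alpha>_def nonneg_orthant_def zero_set_def by auto
    ultimately show "\<exists>\<alpha>\<in>nonneg_orthant \<inter> event_variety E y. Z = zero_set \<alpha>"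
      by blast
  qed (use siphon_zero_set_event_variety assms(3) in blast)
  moreover have "critical_siphon E y Z \<longleftrightarrow>
      (\<exists>\<alpha>\<in>nonneg_orthant \<inter> event_variety E y. Z = zero_set \<alpha> \<and>
          invariant_polyhedron E y \<alpha> \<inter> pos_orthant \<noteq> {})"
  proof
    assume "critical_siphon E y Z"
    then obtain z \<alpha> where "Z = zero_set z" "invariant_polyhedron E y z \<inter> pos_orthant \<noteq> {}"
      and \<alpha>: "\<alpha> \<in> nonneg_orthant \<inter> event_variety E y" "Z = zero_set \<alpha>"
      using siphon_iff unfolding critical_siphon_def by blast
    then have "invariant_polyhedron E y \<alpha> \<inter> pos_orthant \<noteq> {}"
      using invariant_polyhedron_meets_pos_orthant_zero_set by blast
    with \<alpha> show "\<exists>\<alpha>\<in>nonneg_orthant \<inter> event_variety E y. Z = zero_set \<alpha> \<and>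
        invariant_polyhedron E y \<alpha> \<inter> pos_orthant \<noteq> {}"
      by blast
  qed (use siphon_iff in \<open>auto simp: critical_siphon_def\<close>)
  ultimately show ?thesis
    by blast
qed

end
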